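(* Let $T$ be a set of basic terms, $\kappa$ a time variable, and $\Delta$ the saturation of the sample set $\{t[\kappa]\mid t\in T\}$. Then for any assignment (homomorphism) $h$ from the term algebra to $\mathbf{W}$ and any $n\in\omega^+$, there exists a $\Delta$-diagram $\delta$ such that $\delta(\kappa)=n$ and $\delta(t[\kappa])=[\![t]\!]_h(n)$ for all $t\in T$.
   Context: Time warps: join-preserving maps $f\colon\omega^+\to\omega^+$, $\omega^+=\omega\cup\{\omega\}$, ordered pointwise. $\mathbf{W}=\langle W,\wedge,\vee,\circ,{}^\star,\mathrm{id}\rangle$: pointwise meet/join, composition, identity, and $f^\star$ = largest time warp $h$ with $f\circ h\le p$, where $p(m)=\bigvee\{k\in\omega\mid k<m\}$. Terms are built from variables with $\wedge,\vee,\cdot,{}',1$; basic terms use only variables, $\cdot,{}',1$; $[\![t]\!]_h$ is the value of $t$ in $\mathbf{W}$ under $h$. Samples (formal expressions): $\alpha::=\kappa\mid t[\alpha]\mid \mathrm{suc}(\alpha)\mid\mathrm{last}(t)$ with $\kappa$ a time variable and $t$ a basic term. The relation $\leadsto$ on samples: $t[\alpha]\leadsto\alpha$, $\mathrm{suc}(\alpha)\leadsto\alpha$, $t[\alpha]\leadsto t[\mathrm{last}(t)]$, $(tu)[\alpha]\leadsto t[u[\alpha]]$, $t'[\alpha]\leadsto t[t'[\alpha]]$, $t'[\alpha]\leadsto t[\mathrm{suc}(t'[\alpha])]$. The saturation of a sample set is its closure under $\leadsto$; a set is saturated if closed under $\leadsto$. $S(n)=n+1$ for $n\in\omega$, $S(\omega)=\omega$.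 For saturated $\Delta$, a $\Delta$-diagram is $\delta\colon\Delta\to\omega^+$ such that, whenever the samples mentioned belong to $\Delta$: (1) $\delta(\alpha)\le\delta(\beta)\Rightarrow\delta(t[\alpha])\le\delta(t[\beta])$; (2) $\delta(\alpha)=0\Rightarrow\delta(t[\alpha])=0$; (3) $\delta(\mathrm{suc}(\alpha))=S(\delta(\alpha))$; (4) for $t[\alpha]\in\Delta$: $\delta(\mathrm{last}(t))\le\delta(\alpha)\iff\delta(t[\mathrm{last}(t)])=\delta(t[\alpha])$; (5) $\delta(\mathrm{last}(t))=\omega\Rightarrow\delta(t[\mathrm{last}(t)])=\omega$; (6) $\delta(1[\alpha])=\delta(\alpha)$; (7) $\delta(\mathrm{last}(1))=\omega$; (8) $\delta((tu)[\alpha])=\delta(t[u[\alpha]])$; (9) $\delta(\mathrm{last}(tu))=\omega\Rightarrow\delta(\mathrm{last}(t))=\delta(\mathrm{last}(u))=\omega$; (10) for $t'[\alpha]\in\Delta$: $0<\delta(\alpha)<\omega\Rightarrow\delta(t[t'[\alpha]])<\delta(\alpha)$; (11) for $t'[\alpha]\in\Delta$: $\delta(t'[\alpha])<\omega\Rightarrow\delta(\alpha)\le\delta(t[\mathrm{suc}(t'[\alpha])])$; (12) $\delta(\mathrm{last}(t'))=\omega\Rightarrow\delta(\mathrm{last}(t))=\omega$. *)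

theory Defs
  imports "HOL-Library.Extended_Nat"
begin

text \<open>omega^+ is rendered as enat (finite naturals plus infinity).\<close>

definition time_warp :: "(enat \<Rightarrow> enat) \<Rightarrow> bool" where
  "time_warp f \<longleftrightarrow> (\<forall>A. f (Sup A) = Sup (f ` A))"

definition pred_tw :: "enat \<Rightarrow> enat" where
  "pred_tw m = Sup {enat k | k. enat k < m}"

definition star_tw :: "(enat \<Rightarrow> enat) \<Rightarrow> (enat \<Rightarrow> enat)" where
  "star_tw f = (GREATEST h. time_warp h \<and> f \<circ> h \<le> pred_tw)"

datatype 'v trm = Var 'v | Meet "'v trm" "'v trm" | Join "'v trm" "'v trm"
  | Mult "'v trm" "'v trm" | Star "'v trm" | One

fun basic :: "'v trm \<Rightarrow> bool" where
  "basic (Var x) = True"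
| "basic (Meet t u) = False"
| "basic (Join t u) = False"
| "basic (Mult t u) = (basic t \<and> basic u)"
| "basic (Star t) = basic t"
| "basic One = True"

fun eval :: "('v \<Rightarrow> enat \<Rightarrow> enat) \<Rightarrow> 'v trm \<Rightarrow> enat \<Rightarrow> enat" where
  "eval h (Var x) = h x"
| "eval h (Meet t u) = inf (eval h t) (eval h u)"
| "eval h (Join t u) = sup (eval h t) (eval h u)"
| "eval h (Mult t u) = eval h t \<circ> eval h u"
| "eval h (Star t) = star_tw (eval h t)"
| "eval h One = id"

datatype ('v, 'k) sample = TV 'k | App "'v trm" "('v, 'k) sample"
  | SucS "('v, 'k) sample" | LastS "'v trm"

inductive leadsto :: "('v, 'k) sample \<Rightarrow> ('v, 'k) sample \<Rightarrow> bool" where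
  "leadsto (App t a) a"
| "leadsto (SucS a) a"
| "leadsto (App t a) (App t (LastS t))"
| "leadsto (App (Mult t u) a) (App t (App u a))"
| "leadsto (App (Star t) a) (App t (App (Star t) a))"
| "leadsto (App (Star t) a) (App t (SucS (App (Star t) a)))"

definition saturation :: "('v, 'k) sample set \<Rightarrow> ('v, 'k) sample set" where
  "saturation S = {b. \<exists>a\<in>S. leadsto\<^sup>*\<^sup>* a b}"

definition diagram :: "('v, 'k) sample set \<Rightarrow> (('v, 'k) sample \<Rightarrow> enat) \<Rightarrow> bool" where
  "diagram D d \<longleftrightarrow>
    (\<forall>t a b. a \<in> D \<and> b \<in> D \<and> App t a \<in> D \<and> App t b \<in> D \<longrightarrow>
        d a \<le> d b \<longrightarrow> d (App t a) \<le> d (App t b)) \<and>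
    (\<forall>t a. a \<in> D \<and> App t a \<in> D \<longrightarrow> d a = 0 \<longrightarrow> d (App t a) = 0) \<and>
    (\<forall>a. a \<in> D \<and> SucS a \<in> D \<longrightarrow> d (SucS a) = eSuc (d a)) \<and>
    (\<forall>t a. App t a \<in> D \<and> a \<in> D \<and> LastS t \<in> D \<and> App t (LastS t) \<in> D \<longrightarrow>
        (d (LastS t) \<le> d a \<longleftrightarrow> d (App t (LastS t)) = d (App t a))) \<and>
    (\<forall>t. LastS t \<in> D \<and> App t (LastS t) \<in> D \<longrightarrow> d (LastS t) = \<infinity> \<longrightarrow> d (App t (LastS t)) = \<infinity>) \<and>
    (\<forall>a. App One a \<in> D \<and> a \<in> D \<longrightarrow> d (App One a) = d a) \<and>
    (LastS One \<in> D \<longrightarrow> d (LastS One) = \<infinity>) \<and>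
    (\<forall>t u a. App (Mult t u) a \<in> D \<and> App t (App u a) \<in> D \<longrightarrow>
        d (App (Mult t u) a) = d (App t (App u a))) \<and>
    (\<forall>t u. LastS (Mult t u) \<in> D \<and> LastS t \<in> D \<and> LastS u \<in> D \<longrightarrow>
        d (LastS (Mult t u)) = \<infinity> \<longrightarrow> d (LastS t) = \<infinity> \<and> d (LastS u) = \<infinity>) \<and>
    (\<forall>t a. App (Star t) a \<in> D \<and> a \<in> D \<and> App t (App (Star t) a) \<in> D \<longrightarrow>
        0 < d a \<and> d a < \<infinity> \<longrightarrow> d (App t (App (Star t) a)) < d a) \<and>
    (\<forall>t a. App (Star t) a \<in> D \<and> a \<in> D \<and> App t (SucS (App (Star t) a)) \<in> D \<longrightarrow>
        d (App (Star t) a) < \<infinity> \<longrightarrow> d a \<le> d (App t (SucS (App (Star t) a)))) \<and>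
    (\<forall>t. LastS (Star t) \<in> D \<and> LastS t \<in> D \<longrightarrow> d (LastS (Star t)) = \<infinity> \<longrightarrow> d (LastS t) = \<infinity>)"

end

theory Submission
  imports Defs
begin

(* The diagram is the canonical evaluation of samples: the time variable goes to n, t[a] to
   [[t]]_h applied to the value of a, suc(a) to the successor of that value, and last(t) to the
   least m with [[t]]_h m = [[t]]_h omega.  Saturation keeps all terms basic and basic terms denote
   time warps, so each diagram condition becomes a property of time warps.  Those involving the
   star follow from the explicit description f^star m = sup over k < m of the largest j with
   f j <= k. *)

lemma SUP_enat_infinity: "(SUP k. enat k) = \<infinity>"
  by (simp add: Sup_enat_def finite_image_iff inj_def)

lemma enat_eq_SUP_eSuc_less: "m = (SUP k\<in>{k. enat k < m}. eSuc (enat k))"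
proof (cases m)
  case (enat j)
  show ?thesis
  proof (rule antisym)
    show "m \<le> (SUP k\<in>{k. enat k < m}. eSuc (enat k))"
      using enat by (cases j) (auto simp: eSuc_enat zero_enat_def[symmetric] bot_enat_def intro: SUP_upper2)
  qed (auto simp: SUP_le_iff ileI1)
next
  case infinity
  then show ?thesis
    using eSuc_Sup[of "range enat"] by (simp add: image_image SUP_enat_infinity)
qed

lemma time_warp_SUP: "time_warp f \<Longrightarrow> f (SUP x\<in>A. g x) = (SUP x\<in>A. f (g x))"
  unfolding time_warp_def by (simp add: image_image)

lemma time_warp_zero: "time_warp f \<Longrightarrow> f 0 = 0"
  using time_warp_SUP[of f id "{}"] by (simp add: bot_enat_def)

lemma time_warp_mono: "time_warp f \<Longrightarrow> mono f"
proof
  fix a b :: enat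
  assume "time_warp f" and "a \<le> b"
  then have "f b = sup (f a) (f b)"
    using time_warp_SUP[of f id "{a, b}"] by (simp add: sup_absorb2)
  then show "f a \<le> f b" by (metis sup.cobounded1)
qed

lemma time_warp_infinity: "time_warp f \<Longrightarrow> f \<infinity> = (SUP k. f (enat k))"
  using time_warp_SUP[of f enat UNIV] by (simp add: SUP_enat_infinity)

lemma time_warp_attains_finite_limit:
  assumes "time_warp f" and "f \<infinity> \<noteq> \<infinity>"
  obtains k where "f (enat k) = f \<infinity>"
proof -
  have "f \<infinity> \<in> range (\<lambda>k. f (enat k))"
    using assms time_warp_infinity[OF assms(1)]
    by (auto simp: Sup_enat_def split: if_splits)
  then show ?thesis using that by auto
qed

lemma time_warp_id: "time_warp id"
  unfolding time_warp_def by simp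

lemma time_warp_comp: "time_warp f \<Longrightarrow> time_warp g \<Longrightarrow> time_warp (f \<circ> g)"
  unfolding time_warp_def by (simp add: image_comp)

lemma time_warp_SUP_less: "time_warp (\<lambda>m. SUP k\<in>{k. enat k < m}. g k)"
  unfolding time_warp_def
proof
  fix A :: "enat set"
  have "{k. enat k < Sup A} = (\<Union>a\<in>A. {k. enat k < a})"
    by (auto simp: less_Sup_iff)
  then show "(SUP k\<in>{k. enat k < Sup A}. g k) = (SUP a\<in>A. SUP k\<in>{k. enat k < a}. g k)"
    by (simp add: SUP_UNION)
qed

lemma pred_tw_eq_SUP: "pred_tw m = (SUP k\<in>{k. enat k < m}. enat k)"
  unfolding pred_tw_def by (simp add: setcompr_eq_image)

lemma pred_tw_eSuc: "pred_tw (eSuc (enat k)) = enat k"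
  unfolding pred_tw_eq_SUP
  by (rule antisym) (auto simp: eSuc_enat SUP_le_iff intro: SUP_upper)

lemma pred_tw_less: "0 < m \<Longrightarrow> m < \<infinity> \<Longrightarrow> pred_tw m < m"
  by (cases m) (auto simp: gr0_conv_Suc eSuc_enat[symmetric] pred_tw_eSuc zero_enat_def)

definition residual :: "(enat \<Rightarrow> enat) \<Rightarrow> enat \<Rightarrow> enat" where
  "residual f c = Sup {j. f j \<le> c}"

lemma le_residual_iff:
  assumes "time_warp f"
  shows "j \<le> residual f c \<longleftrightarrow> f j \<le> c"
proof
  assume "j \<le> residual f c"
  then have "f j \<le> f (residual f c)" by (rule monoD[OF time_warp_mono[OF assms]])
  also have "\<dots> = (SUP i\<in>{i. f i \<le> c}. f i)"
    unfolding residual_def using time_warp_SUP[OF assms, of id] by simp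
  also have "\<dots> \<le> c" by (simp add: SUP_le_iff)
  finally show "f j \<le> c" .
qed (simp add: residual_def Sup_upper)

definition residual_star :: "(enat \<Rightarrow> enat) \<Rightarrow> enat \<Rightarrow> enat" where
  "residual_star f m = (SUP k\<in>{k. enat k < m}. residual f (enat k))"

lemma time_warp_residual_star: "time_warp (residual_star f)"
  unfolding residual_star_def by (rule time_warp_SUP_less)

lemma comp_residual_star_le_pred_tw:
  assumes f: "time_warp f"
  shows "f \<circ> residual_star f \<le> pred_tw"
proof (rule le_funI)
  fix m
  have "f (residual_star f m) = (SUP k\<in>{k. enat k < m}. f (residual f (enat k)))"
    unfolding residual_star_def by (rule time_warp_SUP[OF f])
  also have "\<dots> \<le> (SUP k\<in>{k. enat k < m}. enat k)"
    by (rule SUP_mono') (simp add: le_residual_iff[OF f, symmetric])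
  finally show "(f \<circ> residual_star f) m \<le> pred_tw m"
    by (simp add: pred_tw_eq_SUP)
qed

lemma le_residual_star:
  assumes f: "time_warp f" and y: "time_warp y" and fy: "f \<circ> y \<le> pred_tw"
  shows "y \<le> residual_star f"
proof (rule le_funI)
  fix m
  have "y m = y (SUP k\<in>{k. enat k < m}. eSuc (enat k))"
    using enat_eq_SUP_eSuc_less[of m] by (rule arg_cong)
  also have "\<dots> = (SUP k\<in>{k. enat k < m}. y (eSuc (enat k)))"
    by (rule time_warp_SUP[OF y])
  also have "\<dots> \<le> residual_star f m"
    unfolding residual_star_def
  proof (rule SUP_mono')
    fix k
    have "f (y (eSuc (enat k))) \<le> pred_tw (eSuc (enat k))"
      using fy by (simp add: le_fun_def)
    then show "y (eSuc (enat k)) \<le> residual f (enat k)"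
      by (simp add: le_residual_iff[OF f] pred_tw_eSuc)
  qed
  finally show "y m \<le> residual_star f m" .
qed

lemma star_tw_eq_residual_star:
  assumes "time_warp f"
  shows "star_tw f = residual_star f"
  unfolding star_tw_def
  by (rule Greatest_equality)
    (use assms time_warp_residual_star comp_residual_star_le_pred_tw le_residual_star in blast)+

lemma time_warp_star_tw: "time_warp f \<Longrightarrow> time_warp (star_tw f)"
  by (simp add: star_tw_eq_residual_star time_warp_residual_star)

lemma apply_star_tw_less:
  assumes f: "time_warp f" and "0 < d" and "d < \<infinity>"
  shows "f (star_tw f d) < d"
proof -
  have "f (star_tw f d) \<le> pred_tw d"
    using comp_residual_star_le_pred_tw[OF f] by (simp add: star_tw_eq_residual_star[OF f] le_fun_def)
  also have "\<dots> < d" using assms(2,3) by (rule pred_tw_less)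
  finally show ?thesis .
qed

lemma le_apply_Suc_star_tw:
  assumes f: "time_warp f" and s: "star_tw f d = enat s"
  shows "d \<le> f (enat (Suc s))"
proof -
  have "eSuc (enat k) \<le> f (enat (Suc s))" if "enat k < d" for k
  proof -
    have "residual f (enat k) \<le> enat s"
      using that unfolding s[symmetric] star_tw_eq_residual_star[OF f] residual_star_def
      by (auto intro: SUP_upper)
    then have "\<not> enat (Suc s) \<le> residual f (enat k)"
      by (meson enat_ord_simps(2) lessI le_less_trans not_le)
    then have "\<not> f (enat (Suc s)) \<le> enat k"
      by (simp add: le_residual_iff[OF f])
    then show ?thesis by (simp add: ileI1 not_le)
  qed
  then have "(SUP k\<in>{k. enat k < d}. eSuc (enat k)) \<le> f (enat (Suc s))"
    by (simp add: SUP_le_iff)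
  then show ?thesis by (simp only: enat_eq_SUP_eSuc_less[of d, symmetric])
qed

definition last_tw :: "(enat \<Rightarrow> enat) \<Rightarrow> enat" where
  "last_tw f = (LEAST m. f m = f \<infinity>)"

lemma apply_last_tw: "f (last_tw f) = f \<infinity>"
  unfolding last_tw_def by (rule LeastI[where k = "\<infinity>"]) (rule refl)

lemma last_tw_le_iff:
  assumes "mono f"
  shows "last_tw f \<le> x \<longleftrightarrow> f x = f \<infinity>"
proof
  assume "last_tw f \<le> x"
  then have "f \<infinity> \<le> f x" using apply_last_tw[of f] monoD[OF assms] by metis
  moreover have "f x \<le> f \<infinity>" by (rule monoD[OF assms]) simp
  ultimately show "f x = f \<infinity>" by (rule antisym[rotated])
qed (simp add: last_tw_def Least_le)

lemma last_tw_eq_infinity_iff: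
  assumes f: "time_warp f"
  shows "last_tw f = \<infinity> \<longleftrightarrow> f \<infinity> = \<infinity> \<and> (\<forall>k. f (enat k) \<noteq> \<infinity>)"
proof
  assume "last_tw f = \<infinity>"
  then have never: "f (enat k) \<noteq> f \<infinity>" for k
    using last_tw_le_iff[OF time_warp_mono[OF f], of "enat k"] by auto
  then have "f \<infinity> = \<infinity>" using time_warp_attains_finite_limit[OF f] by metis
  with never show "f \<infinity> = \<infinity> \<and> (\<forall>k. f (enat k) \<noteq> \<infinity>)" by simp
next
  assume *: "f \<infinity> = \<infinity> \<and> (\<forall>k. f (enat k) \<noteq> \<infinity>)"
  show "last_tw f = \<infinity>"
  proof (rule ccontr)
    assume "last_tw f \<noteq> \<infinity>"
    then obtain k where "last_tw f = enat k" by auto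
    then have "f (enat k) = \<infinity>" using * apply_last_tw[of f] by simp
    with * show False by blast
  qed
qed

lemma last_tw_id: "last_tw id = \<infinity>"
  unfolding last_tw_def by (rule Least_equality) simp_all

lemma last_tw_comp:
  assumes f: "time_warp f" and g: "time_warp g" and fg: "last_tw (f \<circ> g) = \<infinity>"
  shows "last_tw f = \<infinity> \<and> last_tw g = \<infinity>"
proof -
  have fg_inf: "f (g \<infinity>) = \<infinity>" and fg_fin: "\<And>k. f (g (enat k)) \<noteq> \<infinity>"
    using fg last_tw_eq_infinity_iff[OF time_warp_comp[OF f g]] by auto
  have f_inf: "f \<infinity> = \<infinity>"
    using fg_inf monoD[OF time_warp_mono[OF f], of "g \<infinity>" \<infinity>] by simp
  have g_inf: "g \<infinity> = \<infinity>"
  proof (rule ccontr)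
    assume "g \<infinity> \<noteq> \<infinity>"
    then obtain k where "g (enat k) = g \<infinity>" by (rule time_warp_attains_finite_limit[OF g])
    then show False using fg_inf fg_fin[of k] by simp
  qed
  have "f (enat j) \<noteq> \<infinity>" for j
  proof -
    have "enat j < (SUP k. g (enat k))" using g_inf time_warp_infinity[OF g] by simp
    then obtain k where "enat j < g (enat k)" by (auto simp: less_SUP_iff)
    then have "f (enat j) \<le> f (g (enat k))" by (intro monoD[OF time_warp_mono[OF f]]) simp
    then show ?thesis using fg_fin[of k] by (metis top_enat_def top.extremum_unique)
  qed
  moreover have "g (enat k) \<noteq> \<infinity>" for k
    using fg_fin[of k] f_inf by metis
  ultimately show ?thesis
    using f_inf g_inf last_tw_eq_infinity_iff[OF f] last_tw_eq_infinity_iff[OF g] by simp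
qed

lemma last_tw_star_tw:
  assumes f: "time_warp f" and star: "last_tw (star_tw f) = \<infinity>"
  shows "last_tw f = \<infinity>"
proof -
  have star_inf: "star_tw f \<infinity> = \<infinity>" and star_fin: "\<And>k. star_tw f (enat k) \<noteq> \<infinity>"
    using star last_tw_eq_infinity_iff[OF time_warp_star_tw[OF f]] by auto
  have residual_le_star: "residual f (enat k) \<le> star_tw f m" if "enat k < m" for k m
    using that unfolding star_tw_eq_residual_star[OF f] residual_star_def by (auto intro: SUP_upper)
  have "f \<infinity> = \<infinity>"
  proof (rule ccontr)
    assume "f \<infinity> \<noteq> \<infinity>"
    then obtain c where c: "f \<infinity> = enat c" by auto
    have "f j \<le> enat c" for j
      using monoD[OF time_warp_mono[OF f], of j \<infinity>] c by simp
    then have "residual f (enat c) = \<infinity>"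
      using le_residual_iff[OF f, of \<infinity>] by simp
    then show False
      using residual_le_star[of c "enat (Suc c)"] star_fin[of "Suc c"] by simp
  qed
  moreover have "f (enat j) \<noteq> \<infinity>" for j
  proof
    assume "f (enat j) = \<infinity>"
    then have "\<not> enat j \<le> residual f (enat k)" for k
      by (simp add: le_residual_iff[OF f])
    then have "star_tw f \<infinity> \<le> enat j"
      by (simp add: star_tw_eq_residual_star[OF f] residual_star_def SUP_le_iff not_le less_imp_le)
    then show False using star_inf by simp
  qed
  ultimately show ?thesis by (simp add: last_tw_eq_infinity_iff[OF f])
qed

lemma time_warp_eval:
  assumes "\<forall>x. time_warp (h x)" and "basic t"
  shows "time_warp (eval h t)"
  using assms(2) by (induction t) (auto simp: assms(1) time_warp_comp time_warp_id time_warp_star_tw)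

fun basic_sample :: "('v, 'k) sample \<Rightarrow> bool" where
  "basic_sample (TV \<kappa>) = True"
| "basic_sample (App t a) = (basic t \<and> basic_sample a)"
| "basic_sample (SucS a) = basic_sample a"
| "basic_sample (LastS t) = basic t"

lemma leadsto_basic_sample: "leadsto a b \<Longrightarrow> basic_sample a \<Longrightarrow> basic_sample b"
  by (induction rule: leadsto.induct) auto

lemma basic_sample_saturation:
  assumes "\<forall>a\<in>S. basic_sample a" and "b \<in> saturation S"
  shows "basic_sample b"
proof -
  obtain a where "a \<in> S" and "leadsto\<^sup>*\<^sup>* a b"
    using assms(2) by (auto simp: saturation_def)
  from \<open>leadsto\<^sup>*\<^sup>* a b\<close> show ?thesis
    by (induction rule: rtranclp_induct) (use \<open>a \<in> S\<close> assms(1) in \<open>auto intro: leadsto_basic_sample\<close>)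
qed

fun sample_value :: "('v \<Rightarrow> enat \<Rightarrow> enat) \<Rightarrow> enat \<Rightarrow> ('v, 'k) sample \<Rightarrow> enat" where
  "sample_value h n (TV \<kappa>) = n"
| "sample_value h n (App t a) = eval h t (sample_value h n a)"
| "sample_value h n (SucS a) = eSuc (sample_value h n a)"
| "sample_value h n (LastS t) = last_tw (eval h t)"

lemma diagram_sample_value:
  assumes h: "\<forall>x. time_warp (h x)" and D: "\<forall>a\<in>D. basic_sample a"
  shows "diagram D (sample_value h n)"
proof -
  have app: "time_warp (eval h t)" if "App t a \<in> D" for t a
    using that D time_warp_eval[OF h] by fastforce
  have last: "time_warp (eval h t)" if "LastS t \<in> D" for t
    using that D time_warp_eval[OF h] by fastforce
  have star: "time_warp (eval h t)" if "App (Star t) a \<in> D" for t a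
    using that D time_warp_eval[OF h] by fastforce
  show ?thesis
    unfolding diagram_def
    using app last star
    by (auto simp: monoD[OF time_warp_mono] time_warp_zero last_tw_le_iff[OF time_warp_mono]
        apply_last_tw last_tw_id apply_star_tw_less eSuc_enat le_apply_Suc_star_tw
        dest: last_tw_eq_infinity_iff[THEN iffD1, rotated] last_tw_comp[rotated 2] last_tw_star_tw[rotated])
qed

theorem proposition3p3:
  fixes T :: "'v trm set" and \<kappa> :: 'k and h :: "'v \<Rightarrow> enat \<Rightarrow> enat" and n :: enat
  assumes "\<forall>t\<in>T. basic t"
    and "\<forall>x. time_warp (h x)"
  shows "\<exists>\<delta>. diagram (saturation {App t (TV \<kappa>) | t. t \<in> T}) \<delta> \<and> \<delta> (TV \<kappa>) = n \<and>
           (\<forall>t\<in>T. \<delta> (App t (TV \<kappa>)) = eval h t n)"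
proof (intro exI conjI)
  have "\<forall>a\<in>{App t (TV \<kappa>) | t. t \<in> T}. basic_sample a"
    using assms(1) by auto
  then have "\<forall>b\<in>saturation {App t (TV \<kappa>) | t. t \<in> T}. basic_sample b"
    using basic_sample_saturation by blast
  then show "diagram (saturation {App t (TV \<kappa>) | t. t \<in> T}) (sample_value h n)"
    using assms(2) by (rule diagram_sample_value[rotated])
qed simp_all

end
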